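(* With $0<q<1$, $p=1-q$, $Q=1/q$, $L=\log Q$, let \[ c_2(q)=-\frac{p}{qL}\sum_{l\ge1}\frac{1}{Q^l-1}+\frac pq\sum_{l\ge1}\frac{lQ^l}{(Q^l-1)^2}+\frac1L-\frac1p-\frac qp. \] Then, as $q\to1^-$, \[ c_2(q)=\frac14+\frac19\log q+O(\log^2 q); \] in particular $c_2(q)\to\frac14$. *)

theory Defs
  imports "HOL-Analysis.Analysis" "HOL-Library.Landau_Symbols"
begin

definition c2 :: "real \<Rightarrow> real" where
  "c2 q = (let p = 1 - q; Q = 1 / q; L = ln Q in
      - (p / (q * L)) * (\<Sum>l. 1 / (Q ^ Suc l - 1))
      + (p / q) * (\<Sum>l. real (Suc l) * Q ^ Suc l / (Q ^ Suc l - 1)\<^sup>2)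
      + 1 / L - 1 / p - q / p)"

end

theory Submission
  imports Defs "HOL-Computational_Algebra.Polynomial" "HOL-Real_Asymp.Real_Asymp"
begin

(* Write L = -ln q, p = 1 - q and psi t = t / (e^t - 1). Since Q^l = e^(l L), the two series in c2
   combine into a single series of psi' over the grid l L, l >= 1:
     c2 q = -(p / (q L^2)) * L * sum_l psi'(l L) + 1/L - 1/p - q/p.
   The corrected trapezoid rule (Euler-Maclaurin with one Bernoulli correction), summed over the grid,
   gives L * sum_l psi'(l L) = -psi(L) + L/2 psi'(L) - L^2/12 psi''(L) + O(L^3) uniformly in L,
   because psi'''' is bounded near 0 and decays like e^(-t/2). As p/q = O(L), c2 differs from the
   resulting closed form by O(L^2), and that closed form is expanded at q = 1 directly. *)

definition bose :: "real \<Rightarrow> real" where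
  "bose t = 1 / (exp t - 1)"

(* Since bose' = -(bose + bose^2), the k-th derivative of bose is poly (bose_poly k) \<circ> bose. *)
primrec bose_poly :: "nat \<Rightarrow> real poly" where
  "bose_poly 0 = [:0, 1:]"
| "bose_poly (Suc k) = - pderiv (bose_poly k) * [:0, 1, 1:]"

(* The k-th derivative of psi t = t * bose t; for k = 0 the first summand vanishes. *)
definition psi_deriv :: "nat \<Rightarrow> real \<Rightarrow> real" where
  "psi_deriv k t = real k * poly (bose_poly (k - 1)) (bose t) + t * poly (bose_poly k) (bose t)"

lemma exp_div_exp_minus_one_squared:
  assumes "t \<noteq> 0"
  shows "exp t / (exp t - 1)\<^sup>2 = bose t + (bose t)\<^sup>2"
proof -
  have "exp t - 1 \<noteq> 0" using assms by simp
  then show ?thesis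
    unfolding bose_def by (simp add: divide_simps) (simp add: algebra_simps power2_eq_square)
qed

lemma bose_has_real_derivative:
  assumes "t \<noteq> 0"
  shows "(bose has_real_derivative - (bose t + (bose t)\<^sup>2)) (at t)"
proof -
  have "exp t - 1 \<noteq> 0" using assms by simp
  then have "(bose has_real_derivative - exp t / (exp t - 1)\<^sup>2) (at t)"
    unfolding bose_def[abs_def]
    by (auto intro!: derivative_eq_intros simp: power2_eq_square)
  then show ?thesis
    using exp_div_exp_minus_one_squared[OF assms] by simp
qed

lemma poly_bose_poly_has_real_derivative:
  assumes "t \<noteq> 0"
  shows "((\<lambda>t. poly (bose_poly k) (bose t)) has_real_derivative poly (bose_poly (Suc k)) (bose t)) (at t)"
proof -
  have "poly (bose_poly (Suc k)) (bose t) = poly (pderiv (bose_poly k)) (bose t) * - (bose t + (bose t)\<^sup>2)"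
    by (simp add: algebra_simps power2_eq_square)
  then show ?thesis
    using DERIV_chain2[OF poly_DERIV bose_has_real_derivative[OF assms]] by simp
qed

lemma psi_deriv_has_real_derivative:
  assumes "t \<noteq> 0"
  shows "(psi_deriv k has_real_derivative psi_deriv (Suc k) t) (at t)"
proof -
  have "real k * poly (bose_poly (Suc (k - 1))) (bose t) = real k * poly (bose_poly k) (bose t)"
    by (cases k) simp_all
  then show ?thesis
    using DERIV_add[OF DERIV_cmult[OF poly_bose_poly_has_real_derivative[OF assms, of "k - 1"]]
        DERIV_mult[OF DERIV_ident poly_bose_poly_has_real_derivative[OF assms, of k]], of "real k"]
    unfolding psi_deriv_def[abs_def] by (simp add: algebra_simps)
qed

lemma psi_deriv_explicit:
  "psi_deriv 0 t = t * bose t"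
  "psi_deriv 1 t = bose t - t * (bose t + (bose t)\<^sup>2)"
  "psi_deriv 2 t = - 2 * (bose t + (bose t)\<^sup>2) + t * (bose t + 3 * (bose t)\<^sup>2 + 2 * bose t ^ 3)"
  "psi_deriv 4 t = - 4 * (bose t + 7 * (bose t)\<^sup>2 + 12 * bose t ^ 3 + 6 * bose t ^ 4)
                   + t * (bose t + 15 * (bose t)\<^sup>2 + 50 * bose t ^ 3 + 60 * bose t ^ 4 + 24 * bose t ^ 5)"
  by (simp_all add: psi_deriv_def numeral_eq_Suc pderiv_pCons algebra_simps
      power2_eq_square power3_eq_cube power4_eq_xxxx)

lemma bounded_on_halfline_if_tendsto:
  fixes g :: "real \<Rightarrow> real"
  assumes cont: "continuous_on {a<..} g"
    and lim_a: "(g \<longlongrightarrow> l) (at_right a)" and lim_top: "(g \<longlongrightarrow> m) at_top"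
  shows "\<exists>B. \<forall>t>a. \<bar>g t\<bar> \<le> B"
proof -
  have "eventually (\<lambda>t. \<bar>g t - l\<bar> < 1) (at_right a)"
    using tendstoD[OF lim_a, of 1] by (simp add: dist_real_def)
  then obtain d where "d > a" and near_a: "\<And>t. a < t \<Longrightarrow> t < d \<Longrightarrow> \<bar>g t\<bar> \<le> \<bar>l\<bar> + 1"
    unfolding eventually_at_right_field by force
  have "eventually (\<lambda>t. \<bar>g t - m\<bar> < 1) at_top"
    using tendstoD[OF lim_top, of 1] by (simp add: dist_real_def)
  then obtain T where near_top: "\<And>t. t \<ge> T \<Longrightarrow> \<bar>g t\<bar> \<le> \<bar>m\<bar> + 1"
    unfolding eventually_at_top_linorder by force
  have "compact (g ` {d..T})"
    using \<open>d > a\<close> by (intro compact_continuous_image continuous_on_subset[OF cont]) auto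
  then obtain B where middle: "\<And>t. t \<in> {d..T} \<Longrightarrow> \<bar>g t\<bar> \<le> B"
    unfolding bounded_iff by (metis compact_imp_bounded bounded_iff image_eqI real_norm_def)
  have "\<bar>g t\<bar> \<le> max (\<bar>l\<bar> + 1) (max (\<bar>m\<bar> + 1) B)" if "t > a" for t
    using near_a[OF that] near_top[of t] middle[of t] by (smt (verit) atLeastAtMost_iff)
  then show ?thesis by blast
qed

lemma psi_deriv_4_exp_bound: "\<exists>C. \<forall>t>0. \<bar>psi_deriv 4 t\<bar> \<le> C * exp (- t / 2)"
proof -
  define g where "g t = psi_deriv 4 t * exp (t / 2)" for t
  have "continuous_on {0<..} (psi_deriv 4)"
    by (intro continuous_at_imp_continuous_on ballI DERIV_isCont[OF psi_deriv_has_real_derivative]) auto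
  then have "continuous_on {0<..} g"
    unfolding g_def by (intro continuous_intros) auto
  moreover have "(g \<longlongrightarrow> -1/30) (at_right 0)" "(g \<longlongrightarrow> 0) at_top"
    unfolding g_def psi_deriv_explicit bose_def by real_asymp+
  ultimately obtain C where "\<And>t. t > 0 \<Longrightarrow> \<bar>g t\<bar> \<le> C"
    using bounded_on_halfline_if_tendsto by blast
  moreover have "\<bar>psi_deriv 4 t\<bar> = \<bar>g t\<bar> * exp (- t / 2)" for t
    by (simp add: g_def abs_mult mult.assoc flip: exp_add)
  ultimately show ?thesis
    by (metis exp_gt_zero less_le mult_right_mono)
qed

lemma corrected_trapezoid_error:
  fixes f :: "nat \<Rightarrow> real \<Rightarrow> real"
  assumes "h > 0"
    and deriv: "\<And>m t. m < 4 \<Longrightarrow> x \<le> t \<Longrightarrow> t \<le> x + h \<Longrightarrow> (f m has_real_derivative f (Suc m) t) (at t)"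
    and bound: "\<And>t. x < t \<Longrightarrow> t < x + h \<Longrightarrow> \<bar>f 4 t\<bar> \<le> M"
  shows "\<bar>f 0 (x + h) - f 0 x - h / 2 * (f 1 x + f 1 (x + h)) + h\<^sup>2 / 12 * (f 2 (x + h) - f 2 x)\<bar>
           \<le> M * h ^ 4 / 6"
proof -
  txt \<open>Taylor expansions of f, f' and f'' at x make all terms up to order h^3 cancel.\<close>
  have "x < x + h" using \<open>h > 0\<close> by simp
  obtain s0 where s0: "x < s0" "s0 < x + h"
    and f0: "f 0 (x + h) = f 0 x + f 1 x * h + f 2 x * h\<^sup>2 / 2 + f 3 x * h ^ 3 / 6 + f 4 s0 * h ^ 4 / 24"
    using Taylor_up[of 4 f "f 0" x "x + h" x] deriv \<open>x < x + h\<close>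
    by (auto simp: eval_nat_numeral fact_numeral)
  obtain s1 where s1: "x < s1" "s1 < x + h"
    and f1: "f 1 (x + h) = f 1 x + f 2 x * h + f 3 x * h\<^sup>2 / 2 + f 4 s1 * h ^ 3 / 6"
    using Taylor_up[of 3 "\<lambda>m. f (Suc m)" "f 1" x "x + h" x] deriv \<open>x < x + h\<close>
    by (auto simp: eval_nat_numeral fact_numeral)
  obtain s2 where s2: "x < s2" "s2 < x + h"
    and f2: "f 2 (x + h) = f 2 x + f 3 x * h + f 4 s2 * h\<^sup>2 / 2"
    using Taylor_up[of 2 "\<lambda>m. f (Suc (Suc m))" "f 2" x "x + h" x] deriv \<open>x < x + h\<close>
    by (auto simp: eval_nat_numeral fact_numeral)
  have "f 0 (x + h) - f 0 x - h / 2 * (f 1 x + f 1 (x + h)) + h\<^sup>2 / 12 * (f 2 (x + h) - f 2 x)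
        = h ^ 4 * (f 4 s0 / 24 - f 4 s1 / 12 + f 4 s2 / 24)"
    unfolding f0 f1 f2 by (simp add: field_simps power2_eq_square power3_eq_cube power4_eq_xxxx)
  moreover have "\<bar>f 4 s0 / 24 - f 4 s1 / 12 + f 4 s2 / 24\<bar> \<le> M / 6"
    using bound[OF s0] bound[OF s1] bound[OF s2] unfolding abs_le_iff by linarith
  ultimately show ?thesis
    using \<open>h > 0\<close> by (simp add: abs_mult mult_left_mono mult.commute)
qed

lemma corrected_trapezoid_telescope:
  fixes A B D :: "nat \<Rightarrow> real"
  assumes "A \<longlonglongrightarrow> 0" "D \<longlonglongrightarrow> 0" "summable B"
  shows "(\<lambda>n. A (Suc n) - A n - h / 2 * (B n + B (Suc n)) + h\<^sup>2 / 12 * (D (Suc n) - D n))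
           sums (- A 0 - h * suminf B + h / 2 * B 0 - h\<^sup>2 / 12 * D 0)"
proof -
  have "B sums suminf B" "(\<lambda>n. B (Suc n)) sums (suminf B - B 0)"
    using \<open>summable B\<close> by (simp_all add: summable_sums sums_Suc_iff)
  then have "(\<lambda>n. h / 2 * (B n + B (Suc n))) sums (h / 2 * (suminf B + (suminf B - B 0)))"
    by (rule sums_mult[OF sums_add])
  then have "(\<lambda>n. A (Suc n) - A n - h / 2 * (B n + B (Suc n)) + h\<^sup>2 / 12 * (D (Suc n) - D n))
          sums (0 - A 0 - h / 2 * (suminf B + (suminf B - B 0)) + h\<^sup>2 / 12 * (0 - D 0))"
    by (rule sums_add[OF sums_diff[OF telescope_sums[OF assms(1)]] sums_mult[OF telescope_sums[OF assms(2)]]])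
  then show ?thesis by (simp add: algebra_simps)
qed

lemma corrected_trapezoid_error_exp_decay:
  fixes f :: "nat \<Rightarrow> real \<Rightarrow> real"
  assumes "h > 0" "c > 0" "x > 0"
    and deriv: "\<And>m t. m < 4 \<Longrightarrow> t > 0 \<Longrightarrow> (f m has_real_derivative f (Suc m) t) (at t)"
    and decay: "\<And>t. t > 0 \<Longrightarrow> \<bar>f 4 t\<bar> \<le> C * exp (- c * t)"
  shows "\<bar>f 0 (x + h) - f 0 x - h / 2 * (f 1 x + f 1 (x + h)) + h\<^sup>2 / 12 * (f 2 (x + h) - f 2 x)\<bar>
           \<le> C * exp (- c * x) * h ^ 4 / 6"
proof (rule corrected_trapezoid_error[OF \<open>h > 0\<close>])
  show "(f m has_real_derivative f (Suc m) t) (at t)" if "m < 4" "x \<le> t" for m t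
    using that \<open>x > 0\<close> by (intro deriv) auto
  have "C \<ge> 0"
    using decay[of 1] by (smt (verit) exp_gt_zero zero_le_mult_iff)
  show "\<bar>f 4 s\<bar> \<le> C * exp (- c * x)" if "x < s" for s
  proof -
    have "exp (- c * s) \<le> exp (- c * x)"
      using that \<open>c > 0\<close> by simp
    then show ?thesis
      using decay[of s] that \<open>x > 0\<close> \<open>C \<ge> 0\<close> by (smt (verit) mult_left_mono)
  qed
qed

lemma corrected_trapezoid_series:
  fixes f :: "nat \<Rightarrow> real \<Rightarrow> real"
  assumes "h > 0" "c > 0"
    and deriv: "\<And>m t. m < 4 \<Longrightarrow> t > 0 \<Longrightarrow> (f m has_real_derivative f (Suc m) t) (at t)"
    and decay: "\<And>t. t > 0 \<Longrightarrow> \<bar>f 4 t\<bar> \<le> C * exp (- c * t)"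
    and "(f 0 \<longlongrightarrow> 0) at_top" "(f 2 \<longlongrightarrow> 0) at_top"
    and "summable (\<lambda>n. f 1 (real (Suc n) * h))"
  shows "\<bar>h * (\<Sum>n. f 1 (real (Suc n) * h)) - (- f 0 h + h / 2 * f 1 h - h\<^sup>2 / 12 * f 2 h)\<bar>
           \<le> C * h ^ 3 / (6 * c)"
proof -
  define t where "t n = real (Suc n) * h" for n
  define r where "r = exp (- c * h)"
  define K where "K = C * h ^ 4 / 6"
  define R where "R n = f 0 (t (Suc n)) - f 0 (t n) - h / 2 * (f 1 (t n) + f 1 (t (Suc n)))
                        + h\<^sup>2 / 12 * (f 2 (t (Suc n)) - f 2 (t n))" for n
  have "filterlim t at_top sequentially"
    unfolding t_def using \<open>h > 0\<close> by real_asymp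
  then have "(\<lambda>n. f 0 (t n)) \<longlonglongrightarrow> 0" "(\<lambda>n. f 2 (t n)) \<longlonglongrightarrow> 0"
    using assms(5,6) by (auto intro: filterlim_compose)
  moreover have "summable (\<lambda>n. f 1 (t n))"
    unfolding t_def by fact
  ultimately have "R sums (- f 0 (t 0) - h * (\<Sum>n. f 1 (t n)) + h / 2 * f 1 (t 0) - h\<^sup>2 / 12 * f 2 (t 0))"
    unfolding R_def by (rule corrected_trapezoid_telescope)
  then have R_sum: "suminf R = - (h * (\<Sum>n. f 1 (real (Suc n) * h)) - (- f 0 h + h / 2 * f 1 h - h\<^sup>2 / 12 * f 2 h))"
    by (simp add: sums_iff t_def algebra_simps)
  have R_bound: "\<bar>R n\<bar> \<le> K * r ^ Suc n" for n
  proof -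
    have t_Suc: "t (Suc n) = t n + h"
      by (simp add: t_def algebra_simps)
    have "t n > 0"
      using \<open>h > 0\<close> by (simp add: t_def)
    then have "\<bar>R n\<bar> \<le> C * exp (- c * t n) * h ^ 4 / 6"
      unfolding R_def t_Suc by (rule corrected_trapezoid_error_exp_decay[OF assms(1,2) _ deriv decay])
    moreover have "exp (- c * t n) = exp (real (Suc n) * (- c * h))"
      by (simp add: t_def algebra_simps)
    then have "exp (- c * t n) = r ^ Suc n"
      unfolding r_def exp_of_nat_mult .
    ultimately show ?thesis
      by (simp add: K_def mult_ac)
  qed
  have "r < 1" "r > 0"
    using \<open>c > 0\<close> \<open>h > 0\<close> by (simp_all add: r_def)
  then have "(\<lambda>n. r ^ Suc n) sums (r / (1 - r))"
    using sums_mult[OF geometric_sums[of r], of r] by simp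
  then have geometric: "(\<lambda>n. K * r ^ Suc n) sums (K * (r / (1 - r)))"
    by (rule sums_mult)
  have "\<bar>suminf R\<bar> \<le> (\<Sum>n. K * r ^ Suc n)"
    using norm_suminf_le[OF _ sums_summable[OF geometric], of R] R_bound by simp
  also have "\<dots> = K * (r / (1 - r))"
    using geometric by (simp add: sums_iff)
  also have "\<dots> \<le> K * (1 / (c * h))"
  proof (rule mult_left_mono)
    have "1 + c * h \<le> exp (c * h)"
      by (rule exp_ge_add_one_self)
    then show "r / (1 - r) \<le> 1 / (c * h)"
      using \<open>c > 0\<close> \<open>h > 0\<close> by (simp add: r_def exp_minus field_simps)
    show "K \<ge> 0"
      using R_bound[of 0] \<open>r > 0\<close> by (smt (verit) zero_le_mult_iff zero_less_power)
  qed
  also have "\<dots> = C * h ^ 3 / (6 * c)"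
    using \<open>h > 0\<close> by (simp add: K_def field_simps power_numeral_reduce)
  finally show ?thesis
    unfolding R_sum by simp
qed

lemma summable_at_multiples_if_bigo_exp:
  fixes g :: "real \<Rightarrow> real"
  assumes "c > 0" "h > 0" "g \<in> O[at_top](\<lambda>t. exp (- c * t))"
  shows "summable (\<lambda>n. g (real (Suc n) * h))"
proof -
  have "- c * (real (Suc n) * h) = real (Suc n) * (- c * h)" for n
    by (simp add: algebra_simps)
  then have exp_grid: "(\<lambda>n. exp (- c * (real (Suc n) * h))) = (\<lambda>n. exp (- c * h) ^ Suc n)"
    by (simp only: exp_of_nat_mult)
  have "filterlim (\<lambda>n. real (Suc n) * h) at_top sequentially"
    using \<open>h > 0\<close> by real_asymp
  then have "(\<lambda>n. g (real (Suc n) * h)) \<in> O(\<lambda>n. exp (- c * (real (Suc n) * h)))"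
    by (rule landau_o.big.compose[OF assms(3)])
  then have "(\<lambda>n. g (real (Suc n) * h)) \<in> O(\<lambda>n. exp (- c * h) ^ Suc n)"
    unfolding exp_grid .
  moreover have "summable (\<lambda>n. norm (exp (- c * h) ^ Suc n))"
    using assms(1,2) by (simp add: summable_Suc_iff)
  ultimately show ?thesis
    by (rule summable_comparison_test_bigo[rotated])
qed

lemma c2_series_terms:
  assumes "0 < q" "q < 1"
  defines "L \<equiv> - ln q"
  shows "1 / ((1 / q) ^ Suc n - 1) = bose (real (Suc n) * L)"
    and "real (Suc n) * (1 / q) ^ Suc n / ((1 / q) ^ Suc n - 1)\<^sup>2
           = real (Suc n) * (bose (real (Suc n) * L) + (bose (real (Suc n) * L))\<^sup>2)"
proof -
  have "exp (real (Suc n) * L) = exp L ^ Suc n"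
    by (rule exp_of_nat_mult)
  also have "exp L = 1 / q"
    using \<open>q > 0\<close> by (simp add: L_def exp_minus inverse_eq_divide)
  finally have power_eq: "(1 / q) ^ Suc n = exp (real (Suc n) * L)" ..
  then show "1 / ((1 / q) ^ Suc n - 1) = bose (real (Suc n) * L)"
    by (simp add: bose_def)
  have "real (Suc n) * L \<noteq> 0"
    using assms by (simp add: L_def)
  then show "real (Suc n) * (1 / q) ^ Suc n / ((1 / q) ^ Suc n - 1)\<^sup>2
               = real (Suc n) * (bose (real (Suc n) * L) + (bose (real (Suc n) * L))\<^sup>2)"
    unfolding power_eq times_divide_eq_right[symmetric] by (simp add: exp_div_exp_minus_one_squared)
qed

lemma c2_eq_psi_deriv_series:
  assumes "0 < q" "q < 1"
  defines "L \<equiv> - ln q"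
  shows "summable (\<lambda>n. psi_deriv 1 (real (Suc n) * L))"
    and "c2 q = - (1 - q) / (q * L\<^sup>2) * (L * (\<Sum>n. psi_deriv 1 (real (Suc n) * L)))
                + 1 / L - 1 / (1 - q) - q / (1 - q)"
proof -
  define t where "t n = real (Suc n) * L" for n
  define g where "g t = t * (bose t + (bose t)\<^sup>2)" for t
  have "L > 0"
    using assms by (simp add: L_def)
  have term1: "1 / ((1 / q) ^ Suc n - 1) = bose (t n)" for n
    unfolding t_def L_def by (rule c2_series_terms(1)[OF assms(1,2)])
  have term2: "real (Suc n) * (1 / q) ^ Suc n / ((1 / q) ^ Suc n - 1)\<^sup>2 = g (t n) / L" for n
    using c2_series_terms(2)[OF assms(1,2), of n] \<open>L > 0\<close> by (simp add: g_def t_def L_def)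
  have "ln (1 / q) = L"
    using \<open>q > 0\<close> by (simp add: L_def ln_div)
  then have c2_sums: "c2 q = - ((1 - q) / (q * L)) * (\<Sum>n. bose (t n)) + (1 - q) / q * (\<Sum>n. g (t n) / L)
                             + 1 / L - 1 / (1 - q) - q / (1 - q)"
    unfolding c2_def Let_def term1 term2 by simp
  have psi1: "psi_deriv 1 (t n) = bose (t n) - g (t n)" for n
    unfolding psi_deriv_explicit g_def ..
  have "bose \<in> O[at_top](\<lambda>t. exp (- 1 * t))"
    unfolding bose_def by real_asymp
  then have sum_bose: "summable (\<lambda>n. bose (t n))"
    unfolding t_def using summable_at_multiples_if_bigo_exp[of 1 L bose] \<open>L > 0\<close> by simp
  have "g \<in> O[at_top](\<lambda>t. exp (- (1/2) * t))"
    unfolding g_def bose_def by real_asymp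
  then have sum_g: "summable (\<lambda>n. g (t n))"
    unfolding t_def using summable_at_multiples_if_bigo_exp[of "1/2" L g] \<open>L > 0\<close> by simp
  have "summable (\<lambda>n. psi_deriv 1 (t n))"
    unfolding psi1 by (rule summable_diff[OF sum_bose sum_g])
  then show "summable (\<lambda>n. psi_deriv 1 (real (Suc n) * L))"
    by (simp add: t_def)
  have psi_sum: "(\<Sum>n. psi_deriv 1 (t n)) = (\<Sum>n. bose (t n)) - (\<Sum>n. g (t n))"
    unfolding psi1 by (rule suminf_diff[OF sum_bose sum_g, symmetric])
  have "c2 q = - ((1 - q) / (q * L)) * (\<Sum>n. psi_deriv 1 (t n)) + 1 / L - 1 / (1 - q) - q / (1 - q)"
    unfolding c2_sums suminf_divide[OF sum_g] psi_sum
    using \<open>L > 0\<close> \<open>q > 0\<close> by (simp add: field_simps)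
  also have "\<dots> = - (1 - q) / (q * L\<^sup>2) * (L * (\<Sum>n. psi_deriv 1 (t n)))
                   + 1 / L - 1 / (1 - q) - q / (1 - q)"
    using \<open>L > 0\<close> \<open>q > 0\<close> by (simp add: field_simps power2_eq_square)
  finally show "c2 q = - (1 - q) / (q * L\<^sup>2) * (L * (\<Sum>n. psi_deriv 1 (real (Suc n) * L)))
                + 1 / L - 1 / (1 - q) - q / (1 - q)"
    unfolding t_def .
qed

(* c2 with the series replaced by its Euler-Maclaurin approximation. *)
definition c2_approx :: "real \<Rightarrow> real" where
  "c2_approx q = (let L = - ln q in
     - (1 - q) / (q * L\<^sup>2) * (- psi_deriv 0 L + L / 2 * psi_deriv 1 L - L\<^sup>2 / 12 * psi_deriv 2 L)
     + 1 / L - 1 / (1 - q) - q / (1 - q))"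

lemma c2_approx_error:
  assumes "0 < q" "q < 1"
    and decay: "\<And>t. t > 0 \<Longrightarrow> \<bar>psi_deriv 4 t\<bar> \<le> C * exp (- t / 2)"
  shows "\<bar>c2 q - c2_approx q\<bar> \<le> C / 3 * ((1 - q) * - ln q / q)"
proof -
  define L where "L = - ln q"
  define S where "S = (\<Sum>n. psi_deriv 1 (real (Suc n) * L))"
  have "L > 0"
    using assms by (simp add: L_def)
  have "(psi_deriv 0 \<longlongrightarrow> 0) at_top" "(psi_deriv 2 \<longlongrightarrow> 0) at_top"
    unfolding psi_deriv_explicit[abs_def] bose_def by real_asymp+
  moreover have "\<And>m t. m < 4 \<Longrightarrow> t > 0 \<Longrightarrow> (psi_deriv m has_real_derivative psi_deriv (Suc m) t) (at t)"
    by (simp add: psi_deriv_has_real_derivative)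
  ultimately have "\<bar>L * S - (- psi_deriv 0 L + L / 2 * psi_deriv 1 L - L\<^sup>2 / 12 * psi_deriv 2 L)\<bar>
               \<le> C * L ^ 3 / (6 * (1/2))"
    unfolding S_def using \<open>L > 0\<close> decay c2_eq_psi_deriv_series(1)[OF assms(1,2)]
    by (intro corrected_trapezoid_series) (auto simp: L_def)
  then have error: "\<bar>L * S - (- psi_deriv 0 L + L / 2 * psi_deriv 1 L - L\<^sup>2 / 12 * psi_deriv 2 L)\<bar>
               \<le> C * L ^ 3 / 3"
    by simp
  have "c2 q - c2_approx q
      = - (1 - q) / (q * L\<^sup>2) * (L * S - (- psi_deriv 0 L + L / 2 * psi_deriv 1 L - L\<^sup>2 / 12 * psi_deriv 2 L))"
    unfolding c2_eq_psi_deriv_series(2)[OF assms(1,2)] c2_approx_def Let_def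
      L_def[symmetric] S_def[symmetric]
    by (simp add: algebra_simps)
  then have "\<bar>c2 q - c2_approx q\<bar>
      = (1 - q) / (q * L\<^sup>2) * \<bar>L * S - (- psi_deriv 0 L + L / 2 * psi_deriv 1 L - L\<^sup>2 / 12 * psi_deriv 2 L)\<bar>"
    using assms(1,2) by (simp add: abs_mult)
  also have "\<dots> \<le> (1 - q) / (q * L\<^sup>2) * (C * L ^ 3 / 3)"
    using error assms(1,2) by (intro mult_left_mono) auto
  also have "\<dots> = C / 3 * ((1 - q) * L / q)"
    using \<open>L > 0\<close> \<open>q > 0\<close> by (simp add: field_simps power2_eq_square power3_eq_cube)
  finally show ?thesis
    by (simp add: L_def)
qed

lemma c2_minus_c2_approx_bigo: "(\<lambda>q. c2 q - c2_approx q) \<in> O[at_left 1](\<lambda>q. (ln q)\<^sup>2)"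
proof -
  obtain C where decay: "\<And>t. t > 0 \<Longrightarrow> \<bar>psi_deriv 4 t\<bar> \<le> C * exp (- t / 2)"
    using psi_deriv_4_exp_bound by blast
  have "eventually (\<lambda>q. q \<in> {0<..<1}) (at_left (1::real))"
    by (rule eventually_at_left_real) simp
  then have "eventually (\<lambda>q. norm (c2 q - c2_approx q) \<le> C / 3 * norm ((1 - q) * - ln q / q)) (at_left 1)"
  proof (rule eventually_mono)
    fix q :: real
    assume "q \<in> {0<..<1}"
    then have "(1 - q) * ln q \<le> 0"
      by (simp add: mult_nonneg_nonpos)
    then show "norm (c2 q - c2_approx q) \<le> C / 3 * norm ((1 - q) * - ln q / q)"
      using c2_approx_error[OF _ _ decay, of q] \<open>q \<in> {0<..<1}\<close> by (simp add: abs_of_nonpos)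
  qed
  then have "(\<lambda>q. c2 q - c2_approx q) \<in> O[at_left 1](\<lambda>q. (1 - q) * - ln q / q)"
    by (rule bigoI)
  also have "(\<lambda>q::real. (1 - q) * - ln q / q) \<in> O[at_left 1](\<lambda>q. (ln q)\<^sup>2)"
    by real_asymp
  finally show ?thesis .
qed

lemma c2_approx_expansion:
  "(\<lambda>q. c2_approx q - (1/4 + (1/9) * ln q)) \<in> O[at_left 1](\<lambda>q. (ln q)\<^sup>2)"
  unfolding c2_approx_def psi_deriv_explicit bose_def Let_def by real_asymp

theorem mainTheorem8:
  shows "(\<lambda>q. c2 q - (1/4 + (1/9) * ln q)) \<in> O[at_left 1](\<lambda>q. (ln q)\<^sup>2)
         \<and> (c2 \<longlongrightarrow> 1/4) (at_left 1)"
proof -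
  have "(\<lambda>q. c2 q - (1/4 + (1/9) * ln q))
          = (\<lambda>q. (c2 q - c2_approx q) + (c2_approx q - (1/4 + (1/9) * ln q)))"
    by (rule ext) simp
  then have bigo: "(\<lambda>q. c2 q - (1/4 + (1/9) * ln q)) \<in> O[at_left 1](\<lambda>q. (ln q)\<^sup>2)"
    using sum_in_bigo(1)[OF c2_minus_c2_approx_bigo c2_approx_expansion] by (simp only:)
  moreover have "(\<lambda>q::real. (ln q)\<^sup>2) \<in> o[at_left 1](\<lambda>_. 1)"
    by real_asymp
  ultimately have "((\<lambda>q. c2 q - (1/4 + (1/9) * ln q)) \<longlongrightarrow> 0) (at_left 1)"
    using smalloD_tendsto[OF landau_o.big_small_trans] by fastforce
  moreover have "((\<lambda>q::real. 1/4 + (1/9) * ln q) \<longlongrightarrow> 1/4) (at_left 1)"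
    by real_asymp
  ultimately have "((\<lambda>q. (c2 q - (1/4 + (1/9) * ln q)) + (1/4 + (1/9) * ln q)) \<longlongrightarrow> 0 + 1/4) (at_left 1)"
    by (rule tendsto_add)
  with bigo show ?thesis
    by simp
qed

end
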